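(* Let $n\ge 1$, $k\in\{1,\ldots,n\}$, $r\in\mathbb{R}$ and $x^0\in\mathbb{R}^n$. Let $\kappa\subseteq\{1,\ldots,n\}$ with $|\kappa|=k$ be a set of indices of $k$ largest entries of $x^0$ (ties broken arbitrarily), and let $[k]\in\kappa$ be an index such that $x^0_{[k]}$ is the $k$-th largest entry of $x^0$ (i.e. $x^0_{[k]}=\min_{i\in\kappa}x^0_i$). Then the unique minimizer of $\tfrac12\|x-x^0\|_2^2$ over $\mathcal{B}^r_{(k)}:=\{x\in\mathbb{R}^n:\ \sum_{i=1}^k x^{\downarrow}_i\le r\}$ coincides with the unique minimizer of $\tfrac12\|x-x^0\|_2^2$ over the polyhedron $$\Big\{x\in\mathbb{R}^n:\ \sum_{i\in\kappa}x_i\le r,\ \ x_i\ge x_{[k]}\ \forall i\in\kappa,\ \ x_j\le x_{[k]}\ \forall j\notin\kappa\Big\}.$$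
   Context: For $x\in\mathbb{R}^n$, $x^{\downarrow}$ denotes the nonincreasing rearrangement of $x$, so $\sum_{i=1}^k x^{\downarrow}_i$ is the sum of the $k$ largest entries of $x$. *)

theory Defs
  imports "HOL-Analysis.Analysis" "HOL-Library.Multiset"
begin

definition decr_rearr :: "real^'n \<Rightarrow> real list" where
  "decr_rearr x = rev (sorted_list_of_multiset (image_mset (\<lambda>i. x $ i) (mset_set (UNIV :: 'n set))))"

definition topk_sum :: "nat \<Rightarrow> real^'n \<Rightarrow> real" where
  "topk_sum k x = sum_list (take k (decr_rearr x))"

definition topk_ball :: "nat \<Rightarrow> real \<Rightarrow> (real^'n) set" where
  "topk_ball k r = {x. topk_sum k x \<le> r}"

definition topk_poly :: "'n set \<Rightarrow> 'n \<Rightarrow> real \<Rightarrow> (real^'n) set" where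
  "topk_poly K p r = {x. (\<Sum>i\<in>K. x $ i) \<le> r \<and> (\<forall>i\<in>K. x $ i \<ge> x $ p) \<and> (\<forall>j. j \<notin> K \<longrightarrow> x $ j \<le> x $ p)}"

definition is_proj_min :: "(real^'n) set \<Rightarrow> real^'n \<Rightarrow> real^'n \<Rightarrow> bool" where
  "is_proj_min C x0 x \<longleftrightarrow> x \<in> C \<and> (\<forall>y\<in>C. (1/2) * (norm (x - x0))^2 \<le> (1/2) * (norm (y - x0))^2)"

end

theory Submission
  imports Defs
begin

text \<open>
  Both feasible sets are closed, convex and nonempty, so each has a unique nearest point to
  \<open>x0\<close>. The sum of the \<open>k\<close> largest entries is the maximum of the sums over all \<open>k\<close>-subsets, so
  the ball is an intersection of halfspaces; it is moreover invariant under permutations of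
  the coordinates. Exchanging two coordinates of the projection \<open>y\<close> onto the ball that are
  ordered against \<open>x0\<close> does not increase the distance to \<open>x0\<close> (rearrangement inequality), so by
  uniqueness \<open>y\<close> is ordered like \<open>x0\<close>. Hence \<open>y\<close> satisfies the ordering constraints of the
  polyhedron, on which the top-\<open>k\<close> sum is the linear function \<open>\<Sum>i\<in>\<kappa>. x\<^sub>i\<close>; so \<open>y\<close> lies in
  the polyhedron, which is contained in the ball, and is also the projection onto it.
\<close>

lemma topk_sum_eq_sum_if_dominant:
  fixes x :: "real^'n"
  assumes "card K = k" and dominant: "\<forall>i\<in>K. \<forall>j. j \<notin> K \<longrightarrow> x $ j \<le> x $ i"
  shows "topk_sum k x = (\<Sum>i\<in>K. x $ i)"
proof -
  define A where "A = sorted_list_of_multiset (image_mset (($) x) (mset_set (- K)))"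
  define B where "B = sorted_list_of_multiset (image_mset (($) x) (mset_set K))"
  have "image_mset (($) x) (mset_set UNIV) = mset (A @ B)"
    unfolding A_def B_def by (subst Compl_partition2[of K, symmetric], subst mset_set_Union) auto
  moreover have "sorted (A @ B)"
    unfolding sorted_append A_def B_def using dominant by auto
  ultimately have "decr_rearr x = rev B @ rev A"
    unfolding decr_rearr_def by (metis sorted_list_of_multiset_mset sorted_sort_id rev_append)
  moreover have "length B = k"
    unfolding B_def using assms(1)
    by (metis size_image_mset size_mset size_mset_set mset_sorted_list_of_multiset)
  ultimately have "topk_sum k x = sum_list B"
    unfolding topk_sum_def by simp
  also have "\<dots> = (\<Sum>i\<in>K. x $ i)"
    unfolding B_def by (simp add: sum_mset_sum_list [symmetric] sum_unfold_sum_mset)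
  finally show ?thesis .
qed

lemma max_sum_subset_dominant:
  fixes x :: "real^'n"
  assumes T: "card T = k" and max: "\<And>S. card S = k \<Longrightarrow> (\<Sum>i\<in>S. x $ i) \<le> (\<Sum>i\<in>T. x $ i)"
  shows "\<forall>i\<in>T. \<forall>j. j \<notin> T \<longrightarrow> x $ j \<le> x $ i"
proof (intro ballI allI impI)
  fix i j assume i: "i \<in> T" and j: "j \<notin> T"
  let ?S = "insert j (T - {i})"
  have "card ?S = k"
    using T i j card_Suc_Diff1[of T i] by simp
  moreover have "(\<Sum>l\<in>?S. x $ l) = (\<Sum>l\<in>T. x $ l) - x $ i + x $ j"
    using i j by (simp add: sum_diff1)
  ultimately show "x $ j \<le> x $ i"
    using max[of ?S] by simp
qed

lemma topk_sum_le_iff: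
  fixes x :: "real^'n"
  assumes "k \<le> CARD('n)"
  shows "topk_sum k x \<le> r \<longleftrightarrow> (\<forall>S. card S = k \<longrightarrow> (\<Sum>i\<in>S. x $ i) \<le> r)"
proof -
  have "{S :: 'n set. card S = k} \<noteq> {}"
    using obtain_subset_with_card_n[of k "UNIV :: 'n set"] assms by auto
  then obtain T where T: "card T = k"
    and max: "\<And>S. card S = k \<Longrightarrow> (\<Sum>i\<in>S. x $ i) \<le> (\<Sum>i\<in>T. x $ i)"
    using ex_is_arg_min_if_finite[of "{S. card S = k}" "\<lambda>S. - (\<Sum>i\<in>S. x $ i)"]
    unfolding is_arg_min_linorder by force
  have "topk_sum k x = (\<Sum>i\<in>T. x $ i)"
    using topk_sum_eq_sum_if_dominant[OF T max_sum_subset_dominant[OF T max]] .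
  then show ?thesis
    using T max by (auto intro: order_trans)
qed

lemma topk_ball_eq_Inter:
  assumes "k \<le> CARD('n)"
  shows "topk_ball k r = (\<Inter>S\<in>{S. card S = k}. {x :: real^'n. (\<Sum>i\<in>S. x $ i) \<le> r})"
  unfolding topk_ball_def using topk_sum_le_iff[OF assms] by auto

lemma
  fixes f :: "'a::euclidean_space \<Rightarrow> real"
  assumes "linear f"
  shows convex_linear_sublevel: "convex {x. f x \<le> r}"
    and closed_linear_sublevel: "closed {x. f x \<le> r}"
  using convex_linear_vimage[OF assms, of "{..r}"] assms
  by (auto simp: vimage_def linear_conv_bounded_linear
      intro!: closed_Collect_le continuous_intros linear_continuous_on)

lemma linear_sum_coordinates: "linear (\<lambda>x :: real^'n. \<Sum>i\<in>S. x $ i)"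
  by (intro linear_compose_sum ballI bounded_linear.linear bounded_linear_vec_nth)

lemma
  assumes "k \<le> CARD('n)"
  shows convex_topk_ball: "convex (topk_ball k r :: (real^'n) set)"
    and closed_topk_ball: "closed (topk_ball k r :: (real^'n) set)"
  unfolding topk_ball_eq_Inter[OF assms]
  by (auto intro!: convex_INT closed_INT convex_linear_sublevel closed_linear_sublevel
      linear_sum_coordinates)

lemma
  shows convex_topk_poly: "convex (topk_poly K p r :: (real^'n) set)"
    and closed_topk_poly: "closed (topk_poly K p r :: (real^'n) set)"
proof -
  have linear_diff: "linear (\<lambda>x :: real^'n. x $ i - x $ j)" for i j
    by (intro linear_compose_sub bounded_linear.linear bounded_linear_vec_nth)
  have P_eq: "topk_poly K p r = {x. (\<Sum>i\<in>K. x $ i) \<le> r}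
      \<inter> (\<Inter>i\<in>K. {x. x $ p - x $ i \<le> 0}) \<inter> (\<Inter>j\<in>- K. {x. x $ j - x $ p \<le> 0})"
    unfolding topk_poly_def by auto
  show "convex (topk_poly K p r)"
    unfolding P_eq
    by (intro convex_Int convex_INT convex_linear_sublevel linear_sum_coordinates linear_diff)
  show "closed (topk_poly K p r)"
    unfolding P_eq
    by (intro closed_Int closed_INT ballI closed_linear_sublevel linear_sum_coordinates linear_diff)
qed

lemma topk_poly_eq:
  fixes K :: "'n::finite set"
  assumes "card K = k"
  shows "topk_poly K p r
    = topk_ball k r \<inter> {x :: real^'n. (\<forall>i\<in>K. x $ p \<le> x $ i) \<and> (\<forall>j. j \<notin> K \<longrightarrow> x $ j \<le> x $ p)}"
proof -
  have "topk_sum k x = (\<Sum>i\<in>K. x $ i)"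
    if "\<forall>i\<in>K. x $ p \<le> x $ i" "\<forall>j. j \<notin> K \<longrightarrow> x $ j \<le> x $ p" for x :: "real^'n"
    using that by (intro topk_sum_eq_sum_if_dominant[OF assms]) (meson order_trans)
  then show ?thesis
    unfolding topk_poly_def topk_ball_def by auto
qed

lemma decr_rearr_permute:
  fixes x :: "real^'n"
  assumes "bij \<pi>"
  shows "decr_rearr (\<chi> i. x $ \<pi> i) = decr_rearr x"
proof -
  have "image_mset (($) (\<chi> i. x $ \<pi> i)) (mset_set UNIV)
      = image_mset (($) x) (image_mset \<pi> (mset_set UNIV))"
    by (simp add: multiset.map_comp comp_def vec_lambda_inverse)
  also have "image_mset \<pi> (mset_set UNIV) = mset_set (UNIV :: 'n set)"
    using assms by (simp add: image_mset_mset_set bij_is_inj bij_is_surj)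
  finally show ?thesis
    unfolding decr_rearr_def by (simp only:)
qed

lemma topk_ball_transpose:
  "y \<in> topk_ball k r \<Longrightarrow> (\<chi> i. y $ Transposition.transpose a b i) \<in> topk_ball k r"
  by (simp add: topk_ball_def topk_sum_def decr_rearr_permute)

lemma norm_transpose_coordinates:
  fixes y x0 :: "real^'n"
  shows "norm ((\<chi> i. y $ Transposition.transpose a b i) - x0)^2
           + 2 * (y $ b - y $ a) * (x0 $ a - x0 $ b) = norm (y - x0)^2"
proof (cases "a = b")
  case False
  let ?z = "\<chi> i. y $ Transposition.transpose a b i"
  define D where "D i = (y $ i - x0 $ i)^2 - (?z $ i - x0 $ i)^2" for i
  have "norm (y - x0)^2 - norm (?z - x0)^2 = (\<Sum>i\<in>UNIV. D i)"
    by (simp add: D_def norm_vec_def L2_set_def sum_nonneg sum_subtractf)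
  also have "\<dots> = (\<Sum>i\<in>{a, b}. D i)"
    by (rule sum.mono_neutral_right) (auto simp: D_def)
  also have "\<dots> = 2 * (y $ b - y $ a) * (x0 $ a - x0 $ b)"
    using False by (simp add: D_def power2_eq_square algebra_simps)
  finally show ?thesis by simp
qed simp

lemma closest_point_preserves_order:
  fixes S :: "(real^'n) set"
  assumes "closed S" "convex S" "S \<noteq> {}"
    and transpose_invariant: "\<And>y a b. y \<in> S \<Longrightarrow> (\<chi> i. y $ Transposition.transpose a b i) \<in> S"
    and "x0 $ b \<le> x0 $ a"
  shows "closest_point S x0 $ b \<le> closest_point S x0 $ a"
proof (rule ccontr)
  define y where "y = closest_point S x0"
  define z where "z = (\<chi> i. y $ Transposition.transpose a b i)"
  assume "\<not> y $ b \<le> y $ a"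
  then have "z $ a \<noteq> y $ a"
    by (simp add: z_def)
  have "y \<in> S"
    unfolding y_def using closest_point_in_set[OF assms(1,3)] .
  then have "z \<in> S"
    unfolding z_def by (rule transpose_invariant)
  have "0 \<le> 2 * (y $ b - y $ a) * (x0 $ a - x0 $ b)"
    using \<open>\<not> y $ b \<le> y $ a\<close> assms(5) by simp
  then have "norm (z - x0)^2 \<le> norm (y - x0)^2"
    using norm_transpose_coordinates[of y a b x0] unfolding z_def by linarith
  then have "dist x0 z \<le> dist x0 y"
    by (simp add: dist_norm norm_minus_commute power_mono_iff)
  then have "\<forall>w\<in>S. dist x0 z \<le> dist x0 w"
    using closest_point_le[OF assms(1)] unfolding y_def by (meson order_trans)
  then have "z = y"
    unfolding y_def by (rule closest_point_unique[OF assms(2,1) \<open>z \<in> S\<close>])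
  with \<open>z $ a \<noteq> y $ a\<close> show False by simp
qed

lemma is_proj_min_iff_closest_point:
  fixes C :: "(real^'n) set"
  assumes "closed C" "convex C" "C \<noteq> {}"
  shows "is_proj_min C x0 x \<longleftrightarrow> x = closest_point C x0"
proof -
  have "is_proj_min C x0 x \<longleftrightarrow> x \<in> C \<and> (\<forall>y\<in>C. dist x0 x \<le> dist x0 y)"
    unfolding is_proj_min_def dist_norm by (simp add: norm_minus_commute power_mono_iff)
  also have "\<dots> \<longleftrightarrow> x = closest_point C x0"
    using closest_point_unique[OF assms(2,1)] closest_point_exists[OF assms(1,3)] by blast
  finally show ?thesis .
qed

theorem lemma2p1:
  fixes x0 :: "real^'n" and k :: nat and r :: real and K :: "'n set" and p :: 'n
  assumes "1 \<le> k" and "k \<le> CARD('n)"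
    and "card K = k"
    and "\<forall>i\<in>K. \<forall>j. j \<notin> K \<longrightarrow> x0 $ j \<le> x0 $ i"
    and "p \<in> K" and "\<forall>i\<in>K. x0 $ p \<le> x0 $ i"
  shows "(\<exists>!x. is_proj_min (topk_ball k r) x0 x)
       \<and> (\<exists>!x. is_proj_min (topk_poly K p r) x0 x)
       \<and> (\<forall>x. is_proj_min (topk_ball k r) x0 x \<longleftrightarrow> is_proj_min (topk_poly K p r) x0 x)"
proof -
  let ?B = "topk_ball k r :: (real^'n) set" and ?P = "topk_poly K p r"
  note P_eq = topk_poly_eq[OF assms(3), of p r]
  have B: "closed ?B" "convex ?B"
    using assms(2) by (rule closed_topk_ball, rule convex_topk_ball)
  have "(\<chi> i. r / k) \<in> ?P"
    unfolding topk_poly_def using assms(1,3) by simp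
  then have "?P \<noteq> {}" and "?B \<noteq> {}"
    using P_eq by auto
  define y where "y = closest_point ?B x0"
  have "y \<in> ?B"
    unfolding y_def using closest_point_in_set[OF B(1) \<open>?B \<noteq> {}\<close>] .
  moreover have "y $ j \<le> y $ i" if "x0 $ j \<le> x0 $ i" for i j
    unfolding y_def
    using closest_point_preserves_order[OF B \<open>?B \<noteq> {}\<close> topk_ball_transpose that] .
  ultimately have "y \<in> ?P"
    unfolding P_eq using assms(4-6) by auto
  have "\<forall>z\<in>?P. dist x0 y \<le> dist x0 z"
    using closest_point_le[OF B(1)] P_eq unfolding y_def by auto
  then have "closest_point ?P x0 = y"
    using closest_point_unique[OF convex_topk_poly closed_topk_poly \<open>y \<in> ?P\<close>] by simp
  then show ?thesis
    using is_proj_min_iff_closest_point[OF B \<open>?B \<noteq> {}\<close>]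
      is_proj_min_iff_closest_point[OF closed_topk_poly convex_topk_poly \<open>?P \<noteq> {}\<close>]
    unfolding y_def by auto
qed

end
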